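(* Let $\mathcal{X},\mathcal{Y}$ be finite, $p\in[1,\infty]$, $W$ a channel and $\tilde W$ a false channel from $\mathcal{X}$ to $\mathcal{Y}$, and let $\Delta_p=\|\tilde W-W\|_p$. If $\Delta_p\le\frac14$, then for every distribution $Q$ on $\mathcal{X}$, $$|\tilde I(Q,\tilde W)-I(Q,W)|\le2f_p(\Delta_p),$$ and $$|\tilde C(\tilde W)-C(W)|\le2f_p(\Delta_p),$$ where $f_p(t)=-t\,|\mathcal{Y}|^{1-1/p}\log\left(\frac{t}{|\mathcal{Y}|^{1/p}}\right)$ (with $1/p=0$ for $p=\infty$). Furthermore, $f_p$ is concave and non-decreasing on $[0,\frac14]$.
   Context: A channel is a conditional pmf $W(y|x)$; a false channel is any non-negative function $\tilde W(y|x)$. $I(Q,W)$ is mutual information of $Q(x)W(y|x)$ and $C(W)=\max_QI(Q,W)$. False mutual information: $\tilde I(Q,\tilde W)=\sum_{x,y}Q(x)\tilde W(y|x)\log\frac{\tilde W(y|x)}{\sum_{x'}Q(x')\tilde W(y|x')}$ with $0\log0=0$; false capacity $\tilde C(\tilde W)=\sup_Q\tilde I(Q,\tilde W)$. Norms: $\|f\|_p=(\sum_{x,y}|f(x,y)|^p)^{1/p}$ for $p<\infty$ and $\|f\|_\infty=\max_{x,y}|f(x,y)|$. *)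

theory Defs
  imports "HOL-Analysis.Analysis" "HOL-Library.Extended_Real"
begin

text \<open>Channels and false channels on finite alphabets 'x, 'y, stored as W x y = W(y|x).
  Logarithms are natural logarithms (the statement is base-invariant).\<close>

definition is_channel :: "('x::finite \<Rightarrow> 'y::finite \<Rightarrow> real) \<Rightarrow> bool" where
  "is_channel W \<longleftrightarrow> (\<forall>x y. 0 \<le> W x y) \<and> (\<forall>x. (\<Sum>y\<in>UNIV. W x y) = 1)"

definition is_false_channel :: "('x::finite \<Rightarrow> 'y::finite \<Rightarrow> real) \<Rightarrow> bool" where
  "is_false_channel W \<longleftrightarrow> (\<forall>x y. 0 \<le> W x y)"

definition is_distr :: "('x::finite \<Rightarrow> real) \<Rightarrow> bool" where
  "is_distr Q \<longleftrightarrow> (\<forall>x. 0 \<le> Q x) \<and> (\<Sum>x\<in>UNIV. Q x) = 1"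

definition false_MI :: "('x::finite \<Rightarrow> real) \<Rightarrow> ('x \<Rightarrow> 'y::finite \<Rightarrow> real) \<Rightarrow> real" where
  "false_MI Q W = (\<Sum>x\<in>UNIV. \<Sum>y\<in>UNIV.
     (if Q x * W x y = 0 then 0
      else Q x * W x y * ln (W x y / (\<Sum>x'\<in>UNIV. Q x' * W x' y))))"

definition MI :: "('x::finite \<Rightarrow> real) \<Rightarrow> ('x \<Rightarrow> 'y::finite \<Rightarrow> real) \<Rightarrow> real" where
  "MI Q W = false_MI Q W"

definition capacity :: "('x::finite \<Rightarrow> 'y::finite \<Rightarrow> real) \<Rightarrow> real" where
  "capacity W = (SUP Q\<in>{Q. is_distr Q}. MI Q W)"

definition false_capacity :: "('x::finite \<Rightarrow> 'y::finite \<Rightarrow> real) \<Rightarrow> real" where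
  "false_capacity W = (SUP Q\<in>{Q. is_distr Q}. false_MI Q W)"

definition pnorm :: "ereal \<Rightarrow> ('x::finite \<Rightarrow> 'y::finite \<Rightarrow> real) \<Rightarrow> real" where
  "pnorm p f = (if p = \<infinity> then Max {\<bar>f x y\<bar> | x y. True}
     else (\<Sum>x\<in>UNIV. \<Sum>y\<in>UNIV. \<bar>f x y\<bar> powr real_of_ereal p) powr (1 / real_of_ereal p))"

definition inv_p :: "ereal \<Rightarrow> real" where
  "inv_p p = (if p = \<infinity> then 0 else 1 / real_of_ereal p)"

definition f_p :: "ereal \<Rightarrow> nat \<Rightarrow> real \<Rightarrow> real" where
  "f_p p m t = - t * real m powr (1 - inv_p p) * ln (t / real m powr inv_p p)"

end

theory Submission imports Defs begin

(* Writing eta(t) = t ln t, the mutual information decomposes as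
     I(Q,V) = sum_x Q(x) sum_y eta(V(y|x)) - sum_y eta(QV(y)),
   where QV is the output distribution.  Both channel rows and output distributions
   of W and Wt are entrywise Delta-close (Delta = ||Wt - W||_p <= 1/4), and their total
   l1-deviation is at most |Y|^(1-1/p) Delta.  The one-variable estimate
     |eta(b) - eta(a)| <= -|b-a| ln |b-a|      (a, b <= 5/4, |b-a| <= 1/4),
   Jensen's inequality for -eta and monotonicity of -eta on [0,1/4] turn this into the
   bound f_p(Delta) for each of the two terms; this gives the bound 2 f_p(Delta) for the
   mutual informations, and a pointwise bound on functions transfers to their suprema,
   giving the capacity bound.  Concavity and monotonicity of f_p follow from writing
   f_p(t) = k t - c eta(t) with c, k >= 0. *)

section \<open>The function t ln t\<close>

text \<open>Tangent-line inequality for the convex function t ln t at b > 0.\<close>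
lemma xlnx_tangent: fixes a b :: real assumes "0 \<le> a" "0 < b"
  shows "a * ln b + a - b \<le> a * ln a"
proof (cases "a = 0")
  case True then show ?thesis using assms by simp
next
  case False
  hence a: "a > 0" using assms by simp
  have "ln (b/a) \<le> b/a - 1" using a assms by (intro ln_le_minus_one) simp
  hence "ln b - ln a \<le> b/a - 1" using a assms by (simp add: ln_div)
  hence "a * (ln b - ln a) \<le> a * (b/a - 1)" using a by (intro mult_left_mono) auto
  thus ?thesis using a by (simp add: algebra_simps)
qed

lemma neg_xlnx_le_one: "0 \<le> (t::real) \<Longrightarrow> - t * ln t \<le> 1"
  using xlnx_tangent[of t 1] by simp

text \<open>t ln t is superadditive on nonnegative reals (the lower half of continuity).\<close>
lemma xlnx_superadditive: fixes a d :: real assumes "0 \<le> a" "0 \<le> d"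
  shows "a * ln a + d * ln d \<le> (a + d) * ln (a + d)"
proof (cases "a = 0 \<or> d = 0")
  case True then show ?thesis by auto
next
  case False
  hence "a > 0" "d > 0" using assms by auto
  hence "a * ln a \<le> a * ln (a + d)" "d * ln d \<le> d * ln (a + d)"
    by (auto intro: mult_left_mono)
  thus ?thesis by (simp add: algebra_simps)
qed

lemma xlnx_convex: "convex_on {0..} (\<lambda>t::real. t * ln t)"
proof (rule convex_onI)
  fix t x y :: real assume t: "0 < t" "t < 1" and xy: "x \<in> {0..}" "y \<in> {0..}"
  define z where "z = (1 - t) * x + t * y"
  have x: "0 \<le> x" and y: "0 \<le> y" using xy by auto
  show "(\<lambda>t. t * ln t) ((1 - t) *\<^sub>R x + t *\<^sub>R y) \<le> (1 - t) * (\<lambda>t. t * ln t) x + t * (\<lambda>t. t * ln t) y"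
  proof (cases "z = 0")
    case True
    have "(1 - t) * x \<ge> 0" "t * y \<ge> 0" using t x y by auto
    hence "x = 0" "y = 0" using True t unfolding z_def by (auto simp: add_nonneg_eq_0_iff)
    thus ?thesis by simp
  next
    case False
    hence z: "z > 0" using t x y unfolding z_def by (smt (verit) mult_nonneg_nonneg)
    have "(1 - t) * (x * ln z + x - z) \<le> (1 - t) * (x * ln x)"
      using xlnx_tangent[OF x z] t by (intro mult_left_mono) auto
    moreover have "t * (y * ln z + y - z) \<le> t * (y * ln y)"
      using xlnx_tangent[OF y z] t by (intro mult_left_mono) auto
    moreover have "(1 - t) * (x * ln z + x - z) + t * (y * ln z + y - z) = z * ln z"
      by (simp add: z_def algebra_simps)
    ultimately show ?thesis by (simp add: z_def[symmetric])
  qed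
qed (simp add: convex_real_interval)

lemma ln_quarter_le: "ln (1/4::real) \<le> -1"
proof -
  have "exp 1 \<le> (4::real)" using exp_le by simp
  hence "ln (exp 1) \<le> ln (4::real)" by (subst ln_le_cancel_iff) auto
  thus ?thesis by (simp add: ln_div)
qed

text \<open>-t ln t is non-decreasing on [0,1/4], since its derivative -1 - ln t is positive there.\<close>
lemma neg_xlnx_mono: fixes a b :: real assumes "0 \<le> a" "a \<le> b" "b \<le> 1/4"
  shows "- a * ln a \<le> - b * ln b"
proof (cases "b = 0")
  case True then show ?thesis using assms by simp
next
  case False
  hence b: "b > 0" using assms by simp
  have "ln b \<le> ln (1/4)" using b assms by simp
  hence "(b - a) * (1 + ln b) \<le> 0" using ln_quarter_le assms by (simp add: mult_nonneg_nonpos)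
  thus ?thesis using xlnx_tangent[of a b] assms b by (simp add: algebra_simps)
qed

text \<open>The constant 5/4 is where
  1 + ln b \<le> -ln (b-a) still holds; it covers entries of false channels.\<close>
lemma xlnx_increment: fixes a b :: real
  assumes "0 \<le> a" "a \<le> b" "b - a \<le> 1/4" "b \<le> 5/4"
  shows "\<bar>b * ln b - a * ln a\<bar> \<le> - (b - a) * ln (b - a)"
proof (cases "b = a")
  case True then show ?thesis by simp
next
  case False
  define d where "d = b - a"
  have d: "d > 0" "d \<le> 1/4" and b: "b > 0" using False assms by (auto simp: d_def)
  have lower: "a * ln a + d * ln d \<le> b * ln b"
    using xlnx_superadditive[of a d] assms d by (simp add: d_def)
  have ln_const: "ln (5/4::real) + ln (1/4) \<le> -1"
  proof -
    have "exp 1 \<le> (16/5::real)" using exp_le by simp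
    hence "ln (exp 1) \<le> ln (16/5::real)" by (subst ln_le_cancel_iff) auto
    thus ?thesis using ln_mult[of "5/4::real" "1/4"] by (simp add: ln_div)
  qed
  have "ln b \<le> ln (5/4)" "ln d \<le> ln (1/4)" using b d assms by simp_all
  hence "1 + ln b \<le> - ln d" using ln_const by linarith
  hence "b * ln b - a * ln a \<le> - d * ln d"
    using xlnx_tangent[of a b] assms b d mult_left_mono[of "1 + ln b" "- ln d" d]
    by (simp add: d_def algebra_simps)
  thus ?thesis using lower by (simp add: d_def[symmetric] abs_le_iff)
qed

lemma xlnx_continuity: fixes a b :: real
  assumes "0 \<le> a" "0 \<le> b" "\<bar>b - a\<bar> \<le> 1/4" "a \<le> 5/4" "b \<le> 5/4"
  shows "\<bar>b * ln b - a * ln a\<bar> \<le> - \<bar>b - a\<bar> * ln \<bar>b - a\<bar>"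
  using xlnx_increment[of a b] xlnx_increment[of b a] assms
  by (cases "a \<le> b") (simp_all add: abs_minus_commute)

lemma distr_average_le: fixes Q :: "'x::finite \<Rightarrow> real"
  assumes Q: "is_distr Q" and g: "\<And>x. g x \<le> B"
  shows "(\<Sum>x\<in>UNIV. Q x * g x) \<le> B"
proof -
  have "(\<Sum>x\<in>UNIV. Q x * g x) \<le> (\<Sum>x\<in>UNIV. Q x * B)"
    using Q g by (intro sum_mono mult_left_mono) (auto simp: is_distr_def)
  thus ?thesis using Q by (simp add: is_distr_def sum_distrib_right[symmetric])
qed

lemma neg_xlnx_jensen: fixes d :: "'y::finite \<Rightarrow> real" assumes "\<And>y. 0 \<le> d y"
  shows "(\<Sum>y\<in>UNIV. - d y * ln (d y))
      \<le> real CARD('y) * (- ((\<Sum>y\<in>UNIV. d y) / CARD('y)) * ln ((\<Sum>y\<in>UNIV. d y) / CARD('y)))"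
proof -
  define m where "m = real CARD('y)"
  have m: "m > 0" unfolding m_def by simp
  define z where "z = (\<Sum>y\<in>UNIV. d y) / m"
  show ?thesis
  proof (cases "z = 0")
    case True
    hence "\<forall>y. d y = 0" using assms m by (simp add: z_def sum_nonneg_eq_0_iff)
    thus ?thesis by simp
  next
    case False
    hence z: "z > 0" using assms m z_def by (simp add: sum_nonneg order_le_neq_trans)
    have "(\<Sum>y\<in>UNIV. d y * ln z + d y - z) \<le> (\<Sum>y\<in>UNIV. d y * ln (d y))"
      by (intro sum_mono xlnx_tangent assms z)
    moreover have "(\<Sum>y\<in>UNIV. d y * ln z + d y - z) = m * z * ln z"
      using m by (simp add: sum_subtractf sum.distrib sum_distrib_right[symmetric] z_def m_def)
    ultimately show ?thesis by (simp add: m_def[symmetric] z_def[symmetric] sum_negf)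
  qed
qed

text \<open>Power-mean (Hoelder) inequality: the l1-norm is at most card S ^ (1 - 1/r) times the
  lr-norm.  Only the positive entries matter, so we apply Jensen to x powr r on them.\<close>
lemma sum_le_card_powr_mean: fixes d :: "'a \<Rightarrow> real"
  assumes S: "finite S" and d: "\<And>i. i \<in> S \<Longrightarrow> 0 \<le> d i" and r: "1 \<le> r"
  shows "(\<Sum>i\<in>S. d i) \<le> real (card S) powr (1 - 1/r) * (\<Sum>i\<in>S. d i powr r) powr (1/r)"
proof -
  define S' where "S' = {i\<in>S. d i > 0}"
  have S'S: "S' \<subseteq> S" and fin: "finite S'" using S by (auto simp: S'_def)
  define A where "A = (\<Sum>i\<in>S'. d i)"
  define B where "B = (\<Sum>i\<in>S'. d i powr r)"
  have eqA: "(\<Sum>i\<in>S. d i) = A" and eqB: "(\<Sum>i\<in>S. d i powr r) = B"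
    using S d unfolding A_def B_def
    by (auto intro!: sum.mono_neutral_right simp: S'_def order_less_le)
  show ?thesis
  proof (cases "S' = {}")
    case True
    then show ?thesis using eqA by (simp add: A_def)
  next
    case False
    define k where "k = real (card S')"
    have k: "k > 0" using False fin by (simp add: k_def card_gt_0_iff)
    have A0: "0 \<le> A" and B0: "0 \<le> B" unfolding A_def B_def S'_def by (auto intro: sum_nonneg)
    have "(\<lambda>x. x powr r) (\<Sum>i\<in>S'. (1/k) *\<^sub>R d i) \<le> (\<Sum>i\<in>S'. (1/k) * (d i powr r))"
      using fin False powr_convex[OF r] k by (intro convex_on_sum) (auto simp: S'_def k_def)
    hence J: "(A/k) powr r \<le> B/k"
      by (simp add: A_def B_def sum_distrib_left[symmetric] sum_divide_distrib[symmetric])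
    have "A/k = ((A/k) powr r) powr (1/r)" using r A0 k by (simp add: powr_powr)
    also have "\<dots> \<le> (B/k) powr (1/r)" using J r A0 k by (intro powr_mono2) auto
    also have "\<dots> = B powr (1/r) / k powr (1/r)" using B0 k by (simp add: powr_divide)
    finally have "A \<le> k * (B powr (1/r) / k powr (1/r))" using k by (simp add: field_simps)
    also have "\<dots> = k powr (1 - 1/r) * B powr (1/r)" using k by (simp add: powr_diff)
    also have "\<dots> \<le> real (card S) powr (1 - 1/r) * B powr (1/r)"
      using k r S S'S unfolding k_def
      by (intro mult_right_mono powr_mono2) (auto intro: card_mono)
    finally show ?thesis using eqA eqB by simp
  qed
qed

section \<open>Consequences of a p-norm bound\<close>

lemma inv_p_bounds: assumes "1 \<le> p" shows "0 \<le> inv_p p" "inv_p p \<le> 1"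
  using assms by (cases p; auto simp: inv_p_def)+

lemma pnorm_entry_le: fixes f :: "'x::finite \<Rightarrow> 'y::finite \<Rightarrow> real"
  assumes p: "1 \<le> p" shows "\<bar>f x y\<bar> \<le> pnorm p f"
proof (cases "p = \<infinity>")
  case True
  have "{\<bar>f x y\<bar> | x y. True} = (\<lambda>(x,y). \<bar>f x y\<bar>) ` UNIV" by auto
  hence "finite {\<bar>f x y\<bar> | x y. True}" by simp
  thus ?thesis using True by (auto simp: pnorm_def intro!: Max_ge)
next
  case False
  then obtain r where pr: "p = ereal r" and r: "1 \<le> r" using p by (cases p) auto
  have "\<bar>f x y\<bar> powr r \<le> (\<Sum>y\<in>UNIV. \<bar>f x y\<bar> powr r)"
    by (rule member_le_sum) auto
  also have "\<dots> \<le> (\<Sum>x\<in>UNIV. \<Sum>y\<in>UNIV. \<bar>f x y\<bar> powr r)"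
    by (rule member_le_sum) (auto intro: sum_nonneg)
  finally have "(\<bar>f x y\<bar> powr r) powr (1/r) \<le> (\<Sum>x\<in>UNIV. \<Sum>y\<in>UNIV. \<bar>f x y\<bar> powr r) powr (1/r)"
    using r by (intro powr_mono2) auto
  thus ?thesis using r pr by (simp add: pnorm_def powr_powr)
qed

lemma pnorm_row_sum_le: fixes f :: "'x::finite \<Rightarrow> 'y::finite \<Rightarrow> real"
  assumes p: "1 \<le> p"
  shows "(\<Sum>y\<in>UNIV. \<bar>f x y\<bar>) \<le> real CARD('y) powr (1 - inv_p p) * pnorm p f"
proof (cases "p = \<infinity>")
  case True
  have "(\<Sum>y\<in>UNIV. \<bar>f x y\<bar>) \<le> (\<Sum>y\<in>(UNIV::'y set). pnorm p f)"
    by (intro sum_mono pnorm_entry_le p)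
  thus ?thesis using True by (simp add: inv_p_def)
next
  case False
  then obtain r where pr: "p = ereal r" and r: "1 \<le> r" using p by (cases p) auto
  have row: "(\<Sum>y\<in>UNIV. \<bar>f x y\<bar> powr r) \<le> (\<Sum>x\<in>UNIV. \<Sum>y\<in>UNIV. \<bar>f x y\<bar> powr r)"
    by (rule member_le_sum) (auto intro: sum_nonneg)
  have "(\<Sum>y\<in>UNIV. \<bar>f x y\<bar>)
      \<le> real CARD('y) powr (1 - 1/r) * (\<Sum>y\<in>UNIV. \<bar>f x y\<bar> powr r) powr (1/r)"
    using sum_le_card_powr_mean[of UNIV "\<lambda>y. \<bar>f x y\<bar>" r] r by simp
  also have "\<dots> \<le> real CARD('y) powr (1 - 1/r) * (\<Sum>x\<in>UNIV. \<Sum>y\<in>UNIV. \<bar>f x y\<bar> powr r) powr (1/r)"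
    using row r by (intro mult_left_mono powr_mono2) (auto intro: sum_nonneg)
  finally show ?thesis using pr by (simp add: pnorm_def inv_p_def)
qed

section \<open>The modulus f_p\<close>

lemma f_p_rescaled: assumes "1 \<le> p" "0 < m"
  shows "f_p p m t = real m * (- (t / real m powr inv_p p) * ln (t / real m powr inv_p p))"
proof -
  have "real m powr (1 - inv_p p) = real m / real m powr inv_p p"
    using assms by (simp add: powr_diff)
  thus ?thesis unfolding f_p_def by (simp add: mult.assoc mult.left_commute)
qed

lemma f_p_linear_minus_xlnx: assumes "1 \<le> p" "0 < m"
  obtains c k where "0 \<le> c" "0 \<le> k" "\<And>t. 0 \<le> t \<Longrightarrow> f_p p m t = k * t - c * (t * ln t)"
proof -
  define c where "c = real m powr (1 - inv_p p)"
  define s where "s = real m powr inv_p p"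
  have s: "s \<ge> 1" unfolding s_def
    using assms inv_p_bounds[OF assms(1)] by (simp add: ge_one_powr_ge_zero)
  have "f_p p m t = c * ln s * t - c * (t * ln t)" if t: "0 \<le> t" for t
  proof (cases "t = 0")
    case True then show ?thesis by (simp add: f_p_def)
  next
    case False
    hence eq: "ln (t / s) = ln t - ln s" using s t by (simp add: ln_div)
    have "f_p p m t = - t * c * ln (t / s)" unfolding f_p_def c_def s_def ..
    also have "\<dots> = c * ln s * t - c * (t * ln t)" unfolding eq by (simp add: right_diff_distrib)
    finally show ?thesis .
  qed
  moreover have "0 \<le> c" "0 \<le> c * ln s" using s by (simp_all add: c_def)
  ultimately show ?thesis using that by blast
qed

lemma concave_on_cong:
  assumes "convex S" "\<And>x. x \<in> S \<Longrightarrow> f x = g x"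
  shows "concave_on S f \<longleftrightarrow> concave_on S g"
  using assms unfolding concave_on_iff convex_def by auto

lemma f_p_concave: assumes "1 \<le> p" "0 < m" shows "concave_on {0..1/4} (f_p p m)"
proof -
  obtain c k where c: "0 \<le> c" and k: "0 \<le> k"
    and F: "\<And>t. 0 \<le> t \<Longrightarrow> f_p p m t = k * t - c * (t * ln t)"
    using f_p_linear_minus_xlnx[OF assms] by blast
  have "convex_on {0..1/4} (\<lambda>t::real. t * ln t)"
    by (rule convex_on_subset[OF xlnx_convex]) auto
  hence "concave_on {0..1/4} (\<lambda>t. k * t - c * (t * ln t))"
    using k c by (intro concave_on_diff concave_on_cmul convex_on_cmul) (auto simp: concave_on_ident)
  thus ?thesis using F by (subst concave_on_cong) auto
qed

lemma f_p_mono: assumes "1 \<le> p" "0 < m" shows "mono_on {0..1/4} (f_p p m)"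
proof (rule mono_onI)
  obtain c k where c: "0 \<le> c" and k: "0 \<le> k"
    and F: "\<And>t. 0 \<le> t \<Longrightarrow> f_p p m t = k * t - c * (t * ln t)"
    using f_p_linear_minus_xlnx[OF assms] by blast
  fix a b :: real assume ab: "a \<in> {0..1/4}" "b \<in> {0..1/4}" "a \<le> b"
  have "b * ln b \<le> a * ln a" using neg_xlnx_mono[of a b] ab by simp
  hence "c * (b * ln b) \<le> c * (a * ln a)" using c by (rule mult_left_mono)
  moreover have "k * a \<le> k * b" using k ab by (simp add: mult_left_mono)
  ultimately show "f_p p m a \<le> f_p p m b" using F[of a] F[of b] ab by simp
qed

text \<open>Entropy-type sum of a nonnegative vector whose l1-norm is at most |Y|^(1-1/p) D:
  by Jensen it is at most |Y| times -z ln z for the mean z \<le> D / |Y|^(1/p), and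
  -t ln t is monotone below 1/4.\<close>
lemma neg_xlnx_sum_le_f_p: fixes d :: "'y::finite \<Rightarrow> real"
  assumes p: "1 \<le> p" and d: "\<And>y. 0 \<le> d y" and D: "0 \<le> D" "D \<le> 1/4"
    and S: "(\<Sum>y\<in>UNIV. d y) \<le> real CARD('y) powr (1 - inv_p p) * D"
  shows "(\<Sum>y\<in>UNIV. - d y * ln (d y)) \<le> f_p p CARD('y) D"
proof -
  define m where "m = real CARD('y)"
  have m: "m \<ge> 1" unfolding m_def by simp
  define s where "s = m powr inv_p p"
  have s: "s \<ge> 1" unfolding s_def using m inv_p_bounds[OF p] by (simp add: ge_one_powr_ge_zero)
  define z where "z = (\<Sum>y\<in>UNIV. d y) / m"
  have z0: "0 \<le> z" unfolding z_def using d m by (simp add: sum_nonneg)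
  have "m powr (1 - inv_p p) = m / s" using m by (simp add: powr_diff s_def)
  hence "(\<Sum>y\<in>UNIV. d y) \<le> (m / s) * D" using S unfolding m_def by simp
  hence "z \<le> ((m / s) * D) / m" unfolding z_def using m by (intro divide_right_mono) auto
  hence zD: "z \<le> D / s" using m by simp
  have Ds: "D / s \<le> 1/4" using D s by (simp add: divide_le_eq)
  have "- z * ln z \<le> - (D/s) * ln (D/s)" by (rule neg_xlnx_mono[OF z0 zD Ds])
  hence "m * (- z * ln z) \<le> m * (- (D/s) * ln (D/s))" using m by (intro mult_left_mono) auto
  moreover have "(\<Sum>y\<in>UNIV. - d y * ln (d y)) \<le> m * (- z * ln z)"
    using neg_xlnx_jensen[of d] d unfolding m_def z_def by simp
  ultimately show ?thesis using f_p_rescaled[OF p, of "CARD('y)" D] unfolding m_def s_def by simp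
qed

lemma xlnx_sum_continuity: fixes a b :: "'y::finite \<Rightarrow> real"
  assumes p: "1 \<le> p" and a: "\<And>y. 0 \<le> a y" "\<And>y. a y \<le> 1" and b: "\<And>y. 0 \<le> b y"
    and close: "\<And>y. \<bar>b y - a y\<bar> \<le> D" and D: "D \<le> 1/4"
    and total: "(\<Sum>y\<in>UNIV. \<bar>b y - a y\<bar>) \<le> real CARD('y) powr (1 - inv_p p) * D"
  shows "\<bar>\<Sum>y\<in>UNIV. b y * ln (b y) - a y * ln (a y)\<bar> \<le> f_p p CARD('y) D"
proof -
  have D0: "0 \<le> D" using close[of undefined] by simp
  have "\<bar>\<Sum>y\<in>UNIV. b y * ln (b y) - a y * ln (a y)\<bar>
      \<le> (\<Sum>y\<in>UNIV. \<bar>b y * ln (b y) - a y * ln (a y)\<bar>)" by (rule sum_abs)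
  also have "\<dots> \<le> (\<Sum>y\<in>UNIV. - \<bar>b y - a y\<bar> * ln \<bar>b y - a y\<bar>)"
  proof (rule sum_mono)
    fix y
    have "b y \<le> 5/4" "a y \<le> 5/4" using close[of y] a(2)[of y] D by linarith+
    thus "\<bar>b y * ln (b y) - a y * ln (a y)\<bar> \<le> - \<bar>b y - a y\<bar> * ln \<bar>b y - a y\<bar>"
      using a(1)[of y] b[of y] close[of y] D by (intro xlnx_continuity) auto
  qed
  also have "\<dots> \<le> f_p p CARD('y) D"
    using neg_xlnx_sum_le_f_p[OF p, of "\<lambda>y. \<bar>b y - a y\<bar>"] D0 D total by simp
  finally show ?thesis .
qed

section \<open>Mutual information\<close>

definition output_distr :: "('x::finite \<Rightarrow> real) \<Rightarrow> ('x \<Rightarrow> 'y \<Rightarrow> real) \<Rightarrow> 'y \<Rightarrow> real" where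
  "output_distr Q V y = (\<Sum>x\<in>UNIV. Q x * V x y)"

lemma false_MI_decomp: fixes Q :: "'x::finite \<Rightarrow> real" and V :: "'x \<Rightarrow> 'y::finite \<Rightarrow> real"
  assumes Q: "\<And>x. 0 \<le> Q x" and V: "\<And>x y. 0 \<le> V x y"
  shows "false_MI Q V = (\<Sum>x\<in>UNIV. Q x * (\<Sum>y\<in>UNIV. V x y * ln (V x y)))
     - (\<Sum>y\<in>UNIV. output_distr Q V y * ln (output_distr Q V y))"
proof -
  let ?P = "output_distr Q V"
  have summand: "(if Q x * V x y = 0 then 0 else Q x * V x y * ln (V x y / ?P y))
     = Q x * (V x y * ln (V x y)) - Q x * V x y * ln (?P y)" for x y
  proof (cases "Q x * V x y = 0")
    case True thus ?thesis by auto
  next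
    case False
    hence pos: "Q x > 0" "V x y > 0" using Q V by (auto simp: order_le_neq_trans)
    have "Q x * V x y \<le> ?P y" unfolding output_distr_def
      by (rule member_le_sum) (use Q V in auto)
    hence "?P y > 0" using pos by (smt (verit) mult_pos_pos)
    hence eq: "ln (V x y / ?P y) = ln (V x y) - ln (?P y)" using pos by (simp add: ln_div)
    show ?thesis using False unfolding eq by (simp add: algebra_simps)
  qed
  have "(\<Sum>x\<in>UNIV. \<Sum>y\<in>UNIV. Q x * V x y * ln (?P y)) = (\<Sum>y\<in>UNIV. ?P y * ln (?P y))"
    by (subst sum.swap) (simp add: output_distr_def sum_distrib_right)
  thus ?thesis
    unfolding false_MI_def output_distr_def[symmetric] summand
    by (simp add: sum_subtractf sum_distrib_left)
qed

lemma channel_entry_le_one: assumes "is_channel W" shows "W x y \<le> 1"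
  using assms member_le_sum[of y UNIV "W x"] by (simp add: is_channel_def)

text \<open>The mutual information of a channel is bounded (needed for the suprema to exist).\<close>
lemma MI_le_card: fixes W :: "'x::finite \<Rightarrow> 'y::finite \<Rightarrow> real"
  assumes W: "is_channel W" and Q: "is_distr Q"
  shows "MI Q W \<le> real CARD('y)"
proof -
  have W0: "\<And>x y. 0 \<le> W x y" and Q0: "\<And>x. 0 \<le> Q x"
    using W Q by (auto simp: is_channel_def is_distr_def)
  have "W x y * ln (W x y) \<le> 0" for x y
    using W0[of x y] channel_entry_le_one[OF W, of x y]
    by (cases "W x y = 0") (auto intro: mult_nonneg_nonpos)
  hence "(\<Sum>y\<in>UNIV. W x y * ln (W x y)) \<le> 0" for x by (intro sum_nonpos)
  hence cond: "(\<Sum>x\<in>UNIV. Q x * (\<Sum>y\<in>UNIV. W x y * ln (W x y))) \<le> 0"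
    using Q0 by (simp add: sum_nonpos mult_nonneg_nonpos)
  have "(\<Sum>y\<in>UNIV. - output_distr Q W y * ln (output_distr Q W y)) \<le> (\<Sum>y\<in>(UNIV::'y set). 1)"
    using Q0 W0 by (intro sum_mono neg_xlnx_le_one) (auto simp: output_distr_def intro: sum_nonneg)
  thus ?thesis using cond
    unfolding MI_def false_MI_decomp[OF Q0 W0] by (simp add: sum_negf)
qed

text \<open>The main estimate for a fixed input distribution: both terms of the decomposition
  change by at most f_p(Delta).\<close>
lemma false_MI_continuity:
  fixes W Wt :: "'x::finite \<Rightarrow> 'y::finite \<Rightarrow> real" and Q :: "'x \<Rightarrow> real"
  assumes p: "1 \<le> p" and W: "is_channel W" and Wt: "is_false_channel Wt"
    and D: "pnorm p (\<lambda>x y. Wt x y - W x y) \<le> 1/4" and Q: "is_distr Q"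
  shows "\<bar>false_MI Q Wt - MI Q W\<bar> \<le> 2 * f_p p CARD('y) (pnorm p (\<lambda>x y. Wt x y - W x y))"
proof -
  define \<Delta> where "\<Delta> = pnorm p (\<lambda>x y. Wt x y - W x y)"
  define c where "c = real CARD('y) powr (1 - inv_p p)"
  have D4: "\<Delta> \<le> 1/4" using D unfolding \<Delta>_def .
  define P where "P = output_distr Q W"
  define Pt where "Pt = output_distr Q Wt"
  have W0: "\<And>x y. 0 \<le> W x y" and Wt0: "\<And>x y. 0 \<le> Wt x y" and Q0: "\<And>x. 0 \<le> Q x"
    using W Wt Q by (auto simp: is_channel_def is_false_channel_def is_distr_def)
  have entry: "\<bar>Wt x y - W x y\<bar> \<le> \<Delta>" for x y
    unfolding \<Delta>_def using pnorm_entry_le[OF p, of "\<lambda>x y. Wt x y - W x y"] by simp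
  have row: "(\<Sum>y\<in>UNIV. \<bar>Wt x y - W x y\<bar>) \<le> c * \<Delta>" for x
    unfolding \<Delta>_def c_def using pnorm_row_sum_le[OF p, of "\<lambda>x y. Wt x y - W x y"] by simp
  have out_dev: "\<bar>Pt y - P y\<bar> \<le> (\<Sum>x\<in>UNIV. Q x * \<bar>Wt x y - W x y\<bar>)" for y
  proof -
    have "Pt y - P y = (\<Sum>x\<in>UNIV. Q x * (Wt x y - W x y))"
      by (simp add: P_def Pt_def output_distr_def sum_subtractf right_diff_distrib)
    thus ?thesis using sum_abs[of "\<lambda>x. Q x * (Wt x y - W x y)" UNIV] Q0 by (simp add: abs_mult)
  qed
  have row_bound: "\<bar>\<Sum>y\<in>UNIV. Wt x y * ln (Wt x y) - W x y * ln (W x y)\<bar> \<le> f_p p CARD('y) \<Delta>"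
    for x
    using xlnx_sum_continuity[OF p, of "W x" "Wt x" \<Delta>] W0 Wt0 entry channel_entry_le_one[OF W]
      D4 row[unfolded c_def] by simp
  have "\<bar>\<Sum>x\<in>UNIV. Q x * (\<Sum>y\<in>UNIV. Wt x y * ln (Wt x y) - W x y * ln (W x y))\<bar>
      \<le> (\<Sum>x\<in>UNIV. Q x * \<bar>\<Sum>y\<in>UNIV. Wt x y * ln (Wt x y) - W x y * ln (W x y)\<bar>)"
    using sum_abs[of "\<lambda>x. Q x * (\<Sum>y\<in>UNIV. Wt x y * ln (Wt x y) - W x y * ln (W x y))" UNIV] Q0
    by (simp add: abs_mult)
  also have "\<dots> \<le> f_p p CARD('y) \<Delta>" by (rule distr_average_le[OF Q row_bound])
  finally have cond_bound: "\<bar>\<Sum>x\<in>UNIV. Q x * (\<Sum>y\<in>UNIV. Wt x y * ln (Wt x y) - W x y * ln (W x y))\<bar>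
      \<le> f_p p CARD('y) \<Delta>" .
  have "(\<Sum>y\<in>UNIV. \<bar>Pt y - P y\<bar>) \<le> (\<Sum>y\<in>UNIV. \<Sum>x\<in>UNIV. Q x * \<bar>Wt x y - W x y\<bar>)"
    by (rule sum_mono[OF out_dev])
  also have "\<dots> = (\<Sum>x\<in>UNIV. Q x * (\<Sum>y\<in>UNIV. \<bar>Wt x y - W x y\<bar>))"
    by (subst sum.swap) (simp add: sum_distrib_left)
  also have "\<dots> \<le> c * \<Delta>" by (rule distr_average_le[OF Q row])
  finally have out_total: "(\<Sum>y\<in>UNIV. \<bar>Pt y - P y\<bar>) \<le> c * \<Delta>" .
  have out_bound: "\<bar>\<Sum>y\<in>UNIV. Pt y * ln (Pt y) - P y * ln (P y)\<bar> \<le> f_p p CARD('y) \<Delta>"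
  proof (rule xlnx_sum_continuity[OF p _ _ _ _ D4 out_total[unfolded c_def]])
    show "0 \<le> P y" "0 \<le> Pt y" for y
      using Q0 W0 Wt0 by (auto simp: P_def Pt_def output_distr_def intro: sum_nonneg)
    show "P y \<le> 1" for y unfolding P_def output_distr_def
      using distr_average_le[OF Q channel_entry_le_one[OF W]] .
    show "\<bar>Pt y - P y\<bar> \<le> \<Delta>" for y
      using out_dev[of y] distr_average_le[OF Q entry] by (rule order_trans)
  qed
  have "false_MI Q Wt - MI Q W
      = (\<Sum>x\<in>UNIV. Q x * (\<Sum>y\<in>UNIV. Wt x y * ln (Wt x y) - W x y * ln (W x y)))
        - (\<Sum>y\<in>UNIV. Pt y * ln (Pt y) - P y * ln (P y))"
    unfolding MI_def false_MI_decomp[OF Q0 W0] false_MI_decomp[OF Q0 Wt0] P_def Pt_def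
    by (simp add: sum_subtractf right_diff_distrib)
  thus ?thesis using cond_bound out_bound unfolding \<Delta>_def by linarith
qed

lemma SUP_abs_diff_le: fixes f g :: "'a \<Rightarrow> real"
  assumes ne: "S \<noteq> {}" and bdd: "bdd_above (g ` S)" and close: "\<And>s. s \<in> S \<Longrightarrow> \<bar>f s - g s\<bar> \<le> B"
  shows "\<bar>(SUP s\<in>S. f s) - (SUP s\<in>S. g s)\<bar> \<le> B"
proof -
  have bdd_f: "bdd_above (f ` S)"
  proof -
    obtain M where "\<And>s. s \<in> S \<Longrightarrow> g s \<le> M" using bdd by (auto simp: bdd_above_def)
    hence "\<And>s. s \<in> S \<Longrightarrow> f s \<le> M + B" using close by (smt (verit))
    thus ?thesis by (intro bdd_aboveI2)
  qed
  have "(SUP s\<in>S. f s) \<le> (SUP s\<in>S. g s) + B"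
    using close cSUP_upper[OF _ bdd] by (intro cSUP_least[OF ne]) (smt (verit))
  moreover have "(SUP s\<in>S. g s) \<le> (SUP s\<in>S. f s) + B"
    using close cSUP_upper[OF _ bdd_f] by (intro cSUP_least[OF ne]) (smt (verit))
  ultimately show ?thesis by linarith
qed

theorem lemma8:
  fixes W Wt :: "'x::finite \<Rightarrow> 'y::finite \<Rightarrow> real" and p :: ereal
  assumes "1 \<le> p" and "is_channel W" and "is_false_channel Wt"
  shows "(pnorm p (\<lambda>x y. Wt x y - W x y) \<le> 1/4 \<longrightarrow>
           (\<forall>Q. is_distr Q \<longrightarrow>
              \<bar>false_MI Q Wt - MI Q W\<bar>
                \<le> 2 * f_p p CARD('y) (pnorm p (\<lambda>x y. Wt x y - W x y))) \<and>
           \<bar>false_capacity Wt - capacity W\<bar>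
                \<le> 2 * f_p p CARD('y) (pnorm p (\<lambda>x y. Wt x y - W x y)))
         \<and> concave_on {0..1/4} (f_p p CARD('y))
         \<and> mono_on {0..1/4} (f_p p CARD('y))"
proof (intro conjI impI allI)
  show "concave_on {0..1/4} (f_p p CARD('y))" using f_p_concave[OF assms(1)] by simp
  show "mono_on {0..1/4} (f_p p CARD('y))" using f_p_mono[OF assms(1)] by simp
  assume D: "pnorm p (\<lambda>x y. Wt x y - W x y) \<le> 1/4"
  note MI_close = false_MI_continuity[OF assms D]
  then show "is_distr Q \<Longrightarrow> \<bar>false_MI Q Wt - MI Q W\<bar>
      \<le> 2 * f_p p CARD('y) (pnorm p (\<lambda>x y. Wt x y - W x y))" for Q .
  have "is_distr (\<lambda>x::'x. 1 / real CARD('x))" by (simp add: is_distr_def)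
  hence "{Q :: 'x \<Rightarrow> real. is_distr Q} \<noteq> {}" by blast
  moreover have "bdd_above ((\<lambda>Q. MI Q W) ` {Q. is_distr Q})"
    using MI_le_card[OF assms(2)] by (intro bdd_aboveI2) auto
  ultimately show "\<bar>false_capacity Wt - capacity W\<bar>
      \<le> 2 * f_p p CARD('y) (pnorm p (\<lambda>x y. Wt x y - W x y))"
    unfolding false_capacity_def capacity_def using MI_close by (intro SUP_abs_diff_le) auto
qed

end
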